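(* Let $T : M_{m,n}\to M_{r,s}$ be a triple morphism which is not identically zero. Then $T$ is one-to-one, and there exist an integer $k\ge 1$ and unitary matrices $U\in M_r$, $V\in M_s$ such that $$T(A) = U\,\mathrm{diag}\{A, A,\dots, A, 0\}\,V\qquad (A\in M_{m,n}),$$ where $\mathrm{diag}\{A,\dots,A,0\}$ is the block-diagonal $r\times s$ matrix with $k$ copies of $A$ followed by a zero block of size $(r-km)\times(s-kn)$ (possibly empty).
   Context: $M_{m,n}$ denotes the $m\times n$ complex matrices, a triple system with product $xy^*z$. A triple morphism is a linear map $T$ with $T(xy^*z) = T(x)T(y)^*T(z)$. *)

theory Defs
  imports "Jordan_Normal_Form.Schur_Decomposition"
begin

definition triple_prod :: "complex mat \<Rightarrow> complex mat \<Rightarrow> complex mat \<Rightarrow> complex mat" where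
  "triple_prod x y z = x * mat_adjoint y * z"

definition triple_morphism :: "nat \<Rightarrow> nat \<Rightarrow> nat \<Rightarrow> nat \<Rightarrow> (complex mat \<Rightarrow> complex mat) \<Rightarrow> bool" where
  "triple_morphism m n r s T \<longleftrightarrow>
     (\<forall>A \<in> carrier_mat m n. T A \<in> carrier_mat r s) \<and>
     (\<forall>A \<in> carrier_mat m n. \<forall>B \<in> carrier_mat m n. T (A + B) = T A + T B) \<and>
     (\<forall>c. \<forall>A \<in> carrier_mat m n. T (c \<cdot>\<^sub>m A) = c \<cdot>\<^sub>m T A) \<and>
     (\<forall>x \<in> carrier_mat m n. \<forall>y \<in> carrier_mat m n. \<forall>z \<in> carrier_mat m n.
        T (triple_prod x y z) = triple_prod (T x) (T y) (T z))"

definition unitary_mat :: "nat \<Rightarrow> complex mat \<Rightarrow> bool" where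
  "unitary_mat r U \<longleftrightarrow> U \<in> carrier_mat r r \<and> U * mat_adjoint U = 1\<^sub>m r \<and> mat_adjoint U * U = 1\<^sub>m r"

text \<open>r x s block-diagonal matrix diag{A,...,A,0} with k copies of the m x n matrix A,
  followed by a zero block of size (r - k m) x (s - k n).\<close>
definition block_diag_rep :: "nat \<Rightarrow> nat \<Rightarrow> nat \<Rightarrow> nat \<Rightarrow> nat \<Rightarrow> complex mat \<Rightarrow> complex mat" where
  "block_diag_rep k m n r s A = mat r s (\<lambda>(i, j).
     if i < k * m \<and> j < k * n \<and> i div m = j div n then A $$ (i mod m, j mod n) else 0)"

end

(*
  Write E i j for the matrix units of M_{m,n} and e i j = T (E i j). Since T preserves the
  triple product, e i j * (e k l)^* * e p q = e i q if j = l and k = p, and 0 otherwise.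
  In particular a = e 0 0 is a partial isometry, so a a^* is an orthogonal projection and
  factors (Gram-Schmidt) as W W^* for an r x k isometry W. Then F i = e i 0 a^* W and
  G j = (e 0 j)^* W are isometries with pairwise orthogonal ranges and e i j = F i (G j)^*.
  Interleaving the columns of the F i (resp. the G j) gives an isometry, which extends to a
  unitary U (resp. to the adjoint of a unitary V), and then
  U diag{E i j, ..., E i j, 0} V = F i (G j)^* = T (E i j).
  Both sides are linear in A, hence T A = U diag{A, ..., A, 0} V for all A. Here k >= 1
  because T is nonzero, and T is injective because A is the first diagonal block of
  U^* (T A) V^*.
*)

theory Submission
  imports Defs
begin

section \<open>Adjoints and column concatenation\<close>

lemma index_mat_adjoint [simp]:
  "i < dim_col A \<Longrightarrow> j < dim_row A \<Longrightarrow> mat_adjoint (A :: complex mat) $$ (i, j) = cnj (A $$ (j, i))"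
  unfolding mat_adjoint_def by (simp add: mat_of_rows_def)

lemma dim_mat_adjoint [simp]:
  "dim_row (mat_adjoint A) = dim_col A" "dim_col (mat_adjoint A) = dim_row A"
  unfolding mat_adjoint_def by (simp_all add: mat_of_rows_def)

lemma mat_adjoint_carrier [simp]: "A \<in> carrier_mat nr nc \<Longrightarrow> mat_adjoint (A :: complex mat) \<in> carrier_mat nc nr"
  unfolding carrier_mat_def by simp

lemma mat_adjoint_adjoint [simp]: "mat_adjoint (mat_adjoint A) = (A :: complex mat)"
  by (rule eq_matI) auto

lemma mat_adjoint_mult:
  "dim_col A = dim_row B \<Longrightarrow> mat_adjoint (A * B :: complex mat) = mat_adjoint B * mat_adjoint A"
  by (intro eq_matI) (auto simp: scalar_prod_def cnj_sum mult.commute)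

lemma mat_adjoint_minus:
  "A \<in> carrier_mat nr nc \<Longrightarrow> B \<in> carrier_mat nr nc \<Longrightarrow> mat_adjoint (A - B :: complex mat) = mat_adjoint A - mat_adjoint B"
  by (intro eq_matI) auto

lemma mat_adjoint_smult: "mat_adjoint (c \<cdot>\<^sub>m A :: complex mat) = cnj c \<cdot>\<^sub>m mat_adjoint A"
  by (intro eq_matI) auto

lemma mat_adjoint_one [simp]: "mat_adjoint (1\<^sub>m n :: complex mat) = 1\<^sub>m n"
  by (intro eq_matI) auto

lemma mat_adjoint_zero [simp]: "mat_adjoint (0\<^sub>m nr nc :: complex mat) = 0\<^sub>m nc nr"
  by (intro eq_matI) auto

lemma assoc_mult_mat_dims:
  "dim_col A = dim_row B \<Longrightarrow> dim_col B = dim_row C \<Longrightarrow> A * B * C = A * (B * C)"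
  by (rule assoc_mult_mat[of _ "dim_row A" "dim_col A" _ "dim_col B" _ "dim_col C"]) (auto intro!: carrier_matI)

lemma mult_smult_right: "(A :: 'a :: comm_semiring_0 mat) * (c \<cdot>\<^sub>m B) = c \<cdot>\<^sub>m (A * B)"
  by (intro eq_matI) (auto simp: scalar_prod_def sum_distrib_left ac_simps)

lemma mult_smult_left:
  "dim_col A = dim_row B \<Longrightarrow> (c \<cdot>\<^sub>m A :: 'a :: comm_semiring_0 mat) * B = c \<cdot>\<^sub>m (A * B)"
  by (intro eq_matI) (auto simp: scalar_prod_def sum_distrib_left ac_simps)

lemma smult_smult_mat: "a \<cdot>\<^sub>m (b \<cdot>\<^sub>m A) = (a * b :: 'a :: semigroup_mult) \<cdot>\<^sub>m A"
  by (intro eq_matI) (auto simp: mult.assoc)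

definition append_cols :: "'a :: zero mat \<Rightarrow> 'a mat \<Rightarrow> 'a mat" where
  "append_cols A B = four_block_mat A B (0\<^sub>m 0 (dim_col A)) (0\<^sub>m 0 (dim_col B))"

lemma append_cols_carrier [simp]:
  "A \<in> carrier_mat nr n1 \<Longrightarrow> B \<in> carrier_mat nr n2 \<Longrightarrow> append_cols A B \<in> carrier_mat nr (n1 + n2)"
  unfolding append_cols_def by (auto intro!: carrier_matI)

lemma mult_append_cols:
  assumes "X \<in> carrier_mat nr' nr" "A \<in> carrier_mat nr n1" "B \<in> carrier_mat nr n2"
  shows "X * append_cols A B = append_cols (X * A) (X * B)"
proof -
  have "X = four_block_mat X (0\<^sub>m nr' 0) (0\<^sub>m 0 nr) (0\<^sub>m 0 0)"
    using assms by (intro eq_matI) auto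
  then show ?thesis
    using assms unfolding append_cols_def
    by (subst (1) \<open>X = _\<close>, subst mult_four_block_mat) auto
qed

lemma mat_adjoint_append_cols:
  "A \<in> carrier_mat nr n1 \<Longrightarrow> B \<in> carrier_mat nr n2 \<Longrightarrow>
    mat_adjoint (append_cols A B :: complex mat) = four_block_mat (mat_adjoint A) (0\<^sub>m n1 0) (mat_adjoint B) (0\<^sub>m n2 0)"
  unfolding append_cols_def by (intro eq_matI) auto

lemma mat_adjoint_append_cols_mult:
  assumes "A \<in> carrier_mat nr n1" "B \<in> carrier_mat nr n2" "C \<in> carrier_mat nr c1" "D \<in> carrier_mat nr c2"
  shows "mat_adjoint (append_cols A B) * append_cols C D
    = four_block_mat (mat_adjoint A * C) (mat_adjoint A * D) (mat_adjoint B * C) (mat_adjoint (B :: complex mat) * D)"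
proof -
  have dims: "dim_col A = n1" "dim_col B = n2" "dim_col C = c1" "dim_col D = c2"
    using assms by auto
  have "mat_adjoint (append_cols A B) * append_cols C D =
    four_block_mat (mat_adjoint A * C + 0\<^sub>m n1 0 * 0\<^sub>m 0 c1) (mat_adjoint A * D + 0\<^sub>m n1 0 * 0\<^sub>m 0 c2)
      (mat_adjoint B * C + 0\<^sub>m n2 0 * 0\<^sub>m 0 c1) (mat_adjoint B * D + 0\<^sub>m n2 0 * 0\<^sub>m 0 c2)"
    unfolding mat_adjoint_append_cols[OF assms(1,2)] unfolding append_cols_def dims using assms
    by (intro mult_four_block_mat) auto
  also have "\<dots> = four_block_mat (mat_adjoint A * C) (mat_adjoint A * D) (mat_adjoint B * C) (mat_adjoint B * D)"
    using assms by (intro cong_four_block_mat) auto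
  finally show ?thesis .
qed

lemma append_cols_mult_adjoint:
  assumes "A \<in> carrier_mat nr n1" "B \<in> carrier_mat nr n2"
  shows "append_cols A B * mat_adjoint (append_cols A B) = A * mat_adjoint A + B * mat_adjoint (B :: complex mat)"
proof -
  have dims: "dim_col A = n1" "dim_col B = n2"
    using assms by auto
  have "append_cols A B * mat_adjoint (append_cols A B) =
    four_block_mat (A * mat_adjoint A + B * mat_adjoint B) (A * 0\<^sub>m n1 0 + B * 0\<^sub>m n2 0)
      (0\<^sub>m 0 n1 * mat_adjoint A + 0\<^sub>m 0 n2 * mat_adjoint B) (0\<^sub>m 0 n1 * 0\<^sub>m n1 0 + 0\<^sub>m 0 n2 * 0\<^sub>m n2 0)"
    unfolding mat_adjoint_append_cols[OF assms(1,2)] unfolding append_cols_def dims using assms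
    by (intro mult_four_block_mat) auto
  also have "\<dots> = A * mat_adjoint A + B * mat_adjoint B"
    using assms by (intro eq_matI) auto
  finally show ?thesis .
qed

section \<open>Matrix units\<close>

definition matrix_unit :: "nat \<Rightarrow> nat \<Rightarrow> nat \<Rightarrow> nat \<Rightarrow> 'a :: {zero, one} mat" where
  "matrix_unit nr nc i j = mat nr nc (\<lambda>(p, q). if p = i \<and> q = j then 1 else 0)"

lemma matrix_unit_carrier [simp]: "matrix_unit nr nc i j \<in> carrier_mat nr nc"
  unfolding matrix_unit_def by simp

lemma dim_matrix_unit [simp]:
  "dim_row (matrix_unit nr nc i j) = nr" "dim_col (matrix_unit nr nc i j) = nc"
  unfolding matrix_unit_def by simp_all

lemma index_matrix_unit [simp]:
  "p < nr \<Longrightarrow> q < nc \<Longrightarrow> matrix_unit nr nc i j $$ (p, q) = (if p = i \<and> q = j then 1 else 0)"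
  unfolding matrix_unit_def by simp

lemma mult_matrix_unit_index:
  assumes "(A :: 'a :: semiring_1 mat) \<in> carrier_mat nr n" "i < n" "p < nr" "q < nc"
  shows "(A * matrix_unit n nc i j) $$ (p, q) = (if q = j then A $$ (p, i) else 0)"
proof -
  have "(A * matrix_unit n nc i j) $$ (p, q) = (\<Sum>u<n. A $$ (p, u) * (if u = i \<and> q = j then 1 else 0))"
    using assms by (simp add: scalar_prod_def atLeast0LessThan)
  also have "\<dots> = (\<Sum>u<n. if u = i then (if q = j then A $$ (p, i) else 0) else 0)"
    by (rule sum.cong) auto
  finally show ?thesis
    using assms by simp
qed

lemma matrix_unit_mult_index:
  assumes "(B :: 'a :: semiring_1 mat) \<in> carrier_mat n nc" "j < n" "p < nr" "q < nc"
  shows "(matrix_unit nr n i j * B) $$ (p, q) = (if p = i then B $$ (j, q) else 0)"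
proof -
  have "(matrix_unit nr n i j * B) $$ (p, q) = (\<Sum>u<n. (if p = i \<and> u = j then 1 else 0) * B $$ (u, q))"
    using assms by (simp add: scalar_prod_def atLeast0LessThan)
  also have "\<dots> = (\<Sum>u<n. if u = j then (if p = i then B $$ (j, q) else 0) else 0)"
    by (rule sum.cong) auto
  finally show ?thesis
    using assms by simp
qed

lemma mult_matrix_unit:
  assumes "k < n"
  shows "matrix_unit nr n i j * matrix_unit n nc k l
    = (if j = k then matrix_unit nr nc i l else (0\<^sub>m nr nc :: 'a :: semiring_1 mat))"
proof -
  have "(matrix_unit nr n i j * matrix_unit n nc k l :: 'a mat) $$ (p, q) = (if q = l \<and> p = i \<and> k = j then 1 else 0)"
    if "p < nr" "q < nc" for p q
    using that assms by (subst mult_matrix_unit_index[OF matrix_unit_carrier assms]) auto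
  then show ?thesis
    by (intro eq_matI) auto
qed

lemma matrix_unit_sandwich:
  assumes "(X :: 'a :: semiring_1 mat) \<in> carrier_mat nr nc" "i < nr" "j < nc"
  shows "matrix_unit p nr a i * X * matrix_unit nc q j b = X $$ (i, j) \<cdot>\<^sub>m matrix_unit p q a b"
proof -
  have "(matrix_unit p nr a i * X * matrix_unit nc q j b) $$ (c, d)
      = (if d = b then (matrix_unit p nr a i * X) $$ (c, j) else 0)" if "c < p" "d < q" for c d
    using that assms by (intro mult_matrix_unit_index[of _ p nc]) auto
  moreover have "(matrix_unit p nr a i * X) $$ (c, j) = (if c = a then X $$ (i, j) else 0)" if "c < p" for c
    using that assms by (intro matrix_unit_mult_index)
  ultimately show ?thesis
    using assms by (intro eq_matI) (auto simp del: index_mult_mat(1))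
qed

lemma mat_adjoint_matrix_unit [simp]:
  "mat_adjoint (matrix_unit nr nc i j :: complex mat) = matrix_unit nc nr j i"
  by (rule eq_matI) auto

lemma triple_prod_matrix_unit:
  assumes "i < m" "k < m" "p < m" "j < n" "l < n" "q < n"
  shows "triple_prod (matrix_unit m n i j) (matrix_unit m n k l) (matrix_unit m n p q)
    = (if j = l \<and> k = p then matrix_unit m n i q else 0\<^sub>m m n)"
  using assms by (auto simp: triple_prod_def mult_matrix_unit)

section \<open>Isometries and orthogonal projections\<close>

definition isometry_mat :: "nat \<Rightarrow> nat \<Rightarrow> complex mat \<Rightarrow> bool" where
  "isometry_mat nr nc F \<longleftrightarrow> F \<in> carrier_mat nr nc \<and> mat_adjoint F * F = 1\<^sub>m nc"

definition projection_mat :: "nat \<Rightarrow> complex mat \<Rightarrow> bool" where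
  "projection_mat n P \<longleftrightarrow> P \<in> carrier_mat n n \<and> mat_adjoint P = P \<and> P * P = P"

lemma wide_mat_kernel_nonzero:
  assumes A: "(A :: 'a :: idom mat) \<in> carrier_mat nr nc" and wide: "nr < nc"
  obtains v where "v \<in> carrier_vec nc" "v \<noteq> 0\<^sub>v nc" "A *\<^sub>v v = 0\<^sub>v nr"
proof -
  \<comment> \<open>Rows nr, ..., nc - 2 of A' are unspecified; only the zero row nc - 1 matters.\<close>
  define A' where "A' = mat\<^sub>r nc nc (\<lambda>i. if i = nc - 1 then 0\<^sub>v nc else row A i)"
  have A': "A' \<in> carrier_mat nc nc"
    unfolding A'_def by simp
  have "det A' = 0"
    unfolding A'_def using wide A by (intro det_row_0) auto
  then obtain v where v: "v \<in> carrier_vec nc" "v \<noteq> 0\<^sub>v nc" "A' *\<^sub>v v = 0\<^sub>v nc"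
    using det_0_iff_vec_prod_zero[OF A'] by blast
  have "A *\<^sub>v v = 0\<^sub>v nr"
  proof (rule eq_vecI)
    fix i assume "i < dim_vec (0\<^sub>v nr :: 'a vec)"
    then have "i < nr"
      by simp
    then have "(A *\<^sub>v v) $ i = (A' *\<^sub>v v) $ i"
      using A wide unfolding A'_def by simp
    then show "(A *\<^sub>v v) $ i = 0\<^sub>v nr $ i"
      using v \<open>i < nr\<close> wide by simp
  qed (use A in simp)
  with v show ?thesis
    using that by blast
qed

lemma isometry_mat_dim_le:
  assumes "isometry_mat nr nc F"
  shows "nc \<le> nr"
proof (rule ccontr)
  assume "\<not> nc \<le> nr"
  have F: "F \<in> carrier_mat nr nc" and iso: "mat_adjoint F * F = 1\<^sub>m nc"
    using assms unfolding isometry_mat_def by auto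
  obtain v where v: "v \<in> carrier_vec nc" "v \<noteq> 0\<^sub>v nc" "F *\<^sub>v v = 0\<^sub>v nr"
    using wide_mat_kernel_nonzero[OF F] \<open>\<not> nc \<le> nr\<close> by auto
  have "v = (mat_adjoint F * F) *\<^sub>v v"
    using iso v by simp
  also have "\<dots> = mat_adjoint F *\<^sub>v 0\<^sub>v nr"
    using F v by (simp add: assoc_mult_mat_vec[of _ nc nr])
  also have "\<dots> = 0\<^sub>v nc"
    using F by (intro eq_vecI) (auto simp: scalar_prod_def)
  finally show False
    using v by simp
qed

lemma append_cols_isometry:
  assumes A: "isometry_mat nr n1 A" and B: "isometry_mat nr n2 B"
    and orth: "mat_adjoint A * B = 0\<^sub>m n1 n2"
  shows "isometry_mat nr (n1 + n2) (append_cols A B)"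
proof -
  have Ac: "A \<in> carrier_mat nr n1" and Bc: "B \<in> carrier_mat nr n2"
    using A B unfolding isometry_mat_def by auto
  have "mat_adjoint B * A = mat_adjoint (mat_adjoint A * B)"
    using Ac Bc by (simp add: mat_adjoint_mult)
  also have "\<dots> = 0\<^sub>m n2 n1"
    using orth by simp
  finally show ?thesis
    using A B Ac Bc orth unfolding isometry_mat_def by (simp add: mat_adjoint_append_cols_mult)
qed

lemma projection_complement:
  assumes P: "projection_mat n P" and F: "isometry_mat n k F" and PF: "P * F = F"
  shows "projection_mat n (P - F * mat_adjoint F)"
    and "mat_adjoint F * (P - F * mat_adjoint F) = 0\<^sub>m k n"
    and "P * (P - F * mat_adjoint F) = P - F * mat_adjoint F"
proof -
  have Pc: "P \<in> carrier_mat n n" and P_adj: "mat_adjoint P = P" and PP: "P * P = P"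
    using P unfolding projection_mat_def by auto
  have Fc: "F \<in> carrier_mat n k" and FF: "mat_adjoint F * F = 1\<^sub>m k"
    using F unfolding isometry_mat_def by auto
  have FFc: "F * mat_adjoint F \<in> carrier_mat n n"
    using Fc by simp
  have "mat_adjoint F = mat_adjoint (P * F)"
    using PF by simp
  also have "\<dots> = mat_adjoint F * P"
    using Pc Fc P_adj by (simp add: mat_adjoint_mult)
  finally have FP: "mat_adjoint F * P = mat_adjoint F" ..
  have "mat_adjoint F * (F * mat_adjoint F) = (mat_adjoint F * F) * mat_adjoint F"
    using Fc by (simp add: assoc_mult_mat_dims)
  then show FQ: "mat_adjoint F * (P - F * mat_adjoint F) = 0\<^sub>m k n"
    using Pc Fc FFc FP FF by (simp add: mult_minus_distrib_mat[of _ k n])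
  have "P * (F * mat_adjoint F) = (P * F) * mat_adjoint F"
    using Pc Fc by (simp add: assoc_mult_mat_dims)
  then show PQ: "P * (P - F * mat_adjoint F) = P - F * mat_adjoint F"
    using Pc FFc PP PF by (simp add: mult_minus_distrib_mat[of _ n n])
  let ?Q = "P - F * mat_adjoint F"
  have "?Q * ?Q = P * ?Q - (F * mat_adjoint F) * ?Q"
    using Pc FFc by (intro minus_mult_distrib_mat[of _ n n] minus_carrier_mat)
  also have "(F * mat_adjoint F) * ?Q = F * (mat_adjoint F * ?Q)"
    using Pc Fc by (simp add: assoc_mult_mat_dims)
  also have "\<dots> = 0\<^sub>m n n"
    using FQ Fc by simp
  finally have "?Q * ?Q = ?Q"
    using PQ Pc FFc by (intro eq_matI) auto
  moreover have "mat_adjoint (P - F * mat_adjoint F) = P - F * mat_adjoint F"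
    using Pc Fc FFc P_adj by (simp add: mat_adjoint_minus[of _ n n] mat_adjoint_mult)
  ultimately show "projection_mat n (P - F * mat_adjoint F)"
    unfolding projection_mat_def using Pc FFc by (simp add: minus_carrier_mat)
qed

lemma projection_mat_diagonal:
  assumes Q: "projection_mat n Q" and j: "j < n"
  shows "Q $$ (j, j) = of_real (\<Sum>t<n. (cmod (Q $$ (t, j)))\<^sup>2)"
proof -
  have Qc: "Q \<in> carrier_mat n n" and "mat_adjoint Q * Q = Q"
    using Q unfolding projection_mat_def by auto
  then have "Q $$ (j, j) = (mat_adjoint Q * Q) $$ (j, j)"
    by simp
  also have "\<dots> = (\<Sum>t<n. cnj (Q $$ (t, j)) * Q $$ (t, j))"
    using Qc j by (simp add: scalar_prod_def atLeast0LessThan)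
  also have "\<dots> = (\<Sum>t<n. of_real ((cmod (Q $$ (t, j)))\<^sup>2))"
    by (intro sum.cong refl) (simp only: complex_norm_square mult.commute)
  finally show ?thesis
    by simp
qed

lemma nonzero_projection_unit_vector:
  assumes Q: "projection_mat n Q" and nz: "Q \<noteq> 0\<^sub>m n n"
  obtains Z where "isometry_mat n 1 Z" "Q * Z = Z"
proof -
  have Qc: "Q \<in> carrier_mat n n" and Q_adj: "mat_adjoint Q = Q" and QQ: "Q * Q = Q"
    using Q unfolding projection_mat_def by auto
  \<comment> \<open>Q $$ (j, j) is the squared length of column j, so it picks a nonzero column to normalise.\<close>
  have "\<exists>j<n. Q $$ (j, j) \<noteq> 0"
  proof (rule ccontr)
    assume "\<not> (\<exists>j<n. Q $$ (j, j) \<noteq> 0)"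
    then have "(\<Sum>t<n. (cmod (Q $$ (t, j)))\<^sup>2) = 0" if "j < n" for j
      using projection_mat_diagonal[OF Q that] that by (metis of_real_eq_0_iff)
    then have "Q $$ (t, j) = 0" if "t < n" "j < n" for t j
      using that by (simp add: sum_nonneg_eq_0_iff)
    then have "Q = 0\<^sub>m n n"
      using Qc by (intro eq_matI) auto
    with nz show False ..
  qed
  then obtain j where j: "j < n" "Q $$ (j, j) \<noteq> 0"
    by blast
  define q where "q = (\<Sum>t<n. (cmod (Q $$ (t, j)))\<^sup>2)"
  have Qjj: "Q $$ (j, j) = of_real q"
    unfolding q_def by (rule projection_mat_diagonal[OF Q j(1)])
  have "q \<noteq> 0"
    using j(2) Qjj by auto
  then have "q > 0"
    unfolding q_def by (simp add: order_less_le sum_nonneg)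
  define Y where "Y = Q * matrix_unit n 1 j 0"
  have Yc: "Y \<in> carrier_mat n 1"
    unfolding Y_def using Qc by simp
  have "mat_adjoint Y * Y = (matrix_unit 1 n 0 j * Q) * (Q * matrix_unit n 1 j 0)"
    unfolding Y_def using Qc Q_adj by (simp add: mat_adjoint_mult)
  also have "\<dots> = matrix_unit 1 n 0 j * (Q * Q) * matrix_unit n 1 j 0"
    using Qc by (simp add: assoc_mult_mat_dims)
  also have "\<dots> = of_real q \<cdot>\<^sub>m 1\<^sub>m 1"
    using Qc j Qjj by (simp add: QQ matrix_unit_sandwich) (intro eq_matI; simp)
  finally have YY: "mat_adjoint Y * Y = of_real q \<cdot>\<^sub>m 1\<^sub>m 1" .
  define Z where "Z = of_real (1 / sqrt q) \<cdot>\<^sub>m Y"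
  have "mat_adjoint Z * Z = of_real (1 / sqrt q * (1 / sqrt q) * q) \<cdot>\<^sub>m 1\<^sub>m 1"
    unfolding Z_def using Yc YY by (simp add: mat_adjoint_smult mult_smult_right mult_smult_left smult_smult_mat flip: of_real_mult)
  also have "\<dots> = 1\<^sub>m 1"
    using \<open>q > 0\<close> by (intro eq_matI) auto
  finally have "isometry_mat n 1 Z"
    unfolding isometry_mat_def Z_def using Yc by simp
  moreover have "Q * Z = Z"
    unfolding Z_def Y_def using Qc QQ by (simp add: mult_smult_right assoc_mult_mat_dims[symmetric])
  ultimately show ?thesis
    using that by blast
qed

lemma projection_isometry_grow:
  assumes P: "projection_mat n P" and F: "isometry_mat n k F" and PF: "P * F = F"
    and ne: "F * mat_adjoint F \<noteq> P"
  obtains F' where "isometry_mat n (Suc k) F'" "P * F' = F'"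
proof -
  let ?Q = "P - F * mat_adjoint F"
  have Pc: "P \<in> carrier_mat n n" and Fc: "F \<in> carrier_mat n k"
    using P F unfolding projection_mat_def isometry_mat_def by auto
  note Q = projection_complement[OF P F PF]
  have "?Q \<noteq> 0\<^sub>m n n"
  proof
    assume "?Q = 0\<^sub>m n n"
    then have "P $$ (i, j) - (F * mat_adjoint F) $$ (i, j) = 0" if "i < n" "j < n" for i j
      using that Pc Fc by (metis index_minus_mat(1) index_zero_mat(1) carrier_matD mult_carrier_mat mat_adjoint_carrier)
    then have "F * mat_adjoint F = P"
      using Pc Fc by (intro eq_matI) auto
    with ne show False ..
  qed
  then obtain Z where Z: "isometry_mat n 1 Z" "?Q * Z = Z"
    using nonzero_projection_unit_vector[OF Q(1)] by blast
  have Zc: "Z \<in> carrier_mat n 1"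
    using Z(1) unfolding isometry_mat_def by simp
  have Qc: "?Q \<in> carrier_mat n n"
    using Q(1) unfolding projection_mat_def by simp
  have "mat_adjoint F * Z = (mat_adjoint F * ?Q) * Z"
    using Z(2) Fc Qc Zc by (simp add: assoc_mult_mat_dims)
  then have FZ: "mat_adjoint F * Z = 0\<^sub>m k 1"
    using Q(2) Zc by simp
  have "P * Z = (P * ?Q) * Z"
    using Z(2) Pc Qc Zc by (simp add: assoc_mult_mat_dims)
  then have PZ: "P * Z = Z"
    using Q(3) Z(2) by simp
  have "isometry_mat n (k + 1) (append_cols F Z)"
    by (rule append_cols_isometry[OF F Z(1) FZ])
  moreover have "P * append_cols F Z = append_cols F Z"
    using Pc Fc Zc PF PZ by (simp add: mult_append_cols)
  ultimately show ?thesis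
    using that by simp
qed

lemma projection_mat_factor:
  assumes P: "projection_mat n P"
  obtains k F where "isometry_mat n k F" "F * mat_adjoint F = P"
proof -
  have "\<exists>k' F'. isometry_mat n k' F' \<and> F' * mat_adjoint F' = P"
    if "isometry_mat n k F" "P * F = F" for k F
    using that
  proof (induction "n - k" arbitrary: k F rule: less_induct)
    case less
    show ?case
    proof (cases "F * mat_adjoint F = P")
      case True
      with less.prems show ?thesis
        by blast
    next
      case False
      then obtain F' where F': "isometry_mat n (Suc k) F'" "P * F' = F'"
        using projection_isometry_grow[OF P less.prems] by blast
      have "n - Suc k < n - k"
        using isometry_mat_dim_le[OF F'(1)] by simp
      with less.hyps F' show ?thesis
        by blast
    qed
  qed
  moreover have "isometry_mat n 0 (0\<^sub>m n 0)"
    unfolding isometry_mat_def by (auto intro!: eq_matI)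
  moreover have "P * 0\<^sub>m n 0 = 0\<^sub>m n 0"
    using P unfolding projection_mat_def by (auto intro: right_mult_zero_mat)
  ultimately show ?thesis
    using that by blast
qed

lemma isometry_extends_to_unitary:
  assumes F: "isometry_mat n k F"
  obtains U where "unitary_mat n U" "\<And>i j. i < n \<Longrightarrow> j < k \<Longrightarrow> U $$ (i, j) = F $$ (i, j)"
proof -
  have Fc: "F \<in> carrier_mat n k"
    using F unfolding isometry_mat_def by simp
  have "projection_mat n (1\<^sub>m n)"
    unfolding projection_mat_def by simp
  note compl = projection_complement[OF this F]
  obtain k' G where G: "isometry_mat n k' G" and GG: "G * mat_adjoint G = 1\<^sub>m n - F * mat_adjoint F"
    using projection_mat_factor[OF compl(1)] Fc by auto
  have Gc: "G \<in> carrier_mat n k'" and G_iso: "mat_adjoint G * G = 1\<^sub>m k'"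
    using G unfolding isometry_mat_def by auto
  have "mat_adjoint F * G = mat_adjoint F * (G * mat_adjoint G) * G"
    using Fc Gc G_iso by (simp add: assoc_mult_mat_dims)
  then have FG: "mat_adjoint F * G = 0\<^sub>m k k'"
    using GG compl(2) Fc Gc by simp
  define U where "U = append_cols F G"
  have U: "isometry_mat n (k + k') U"
    unfolding U_def by (rule append_cols_isometry[OF F G FG])
  have UU: "U * mat_adjoint U = 1\<^sub>m n"
    unfolding U_def using Fc Gc GG by (simp add: append_cols_mult_adjoint) (intro eq_matI; auto)
  have "isometry_mat (k + k') n (mat_adjoint U)"
    using U UU unfolding isometry_mat_def by simp
  then have "k + k' = n"
    using isometry_mat_dim_le U by (meson antisym)
  then have "unitary_mat n U"
    using U UU unfolding isometry_mat_def unitary_mat_def by simp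
  moreover have "U $$ (i, j) = F $$ (i, j)" if "i < n" "j < k" for i j
    unfolding U_def append_cols_def using that Fc Gc by simp
  ultimately show ?thesis
    using that by blast
qed

section \<open>Linear maps between spaces of rectangular matrices\<close>

lemma carrier_mat_matrix_unit_induct [consumes 1, case_names zero add smult unit]:
  assumes A: "(A :: 'a :: semiring_1 mat) \<in> carrier_mat m n"
    and zero: "P (0\<^sub>m m n)"
    and add: "\<And>A B. A \<in> carrier_mat m n \<Longrightarrow> B \<in> carrier_mat m n \<Longrightarrow> P A \<Longrightarrow> P B \<Longrightarrow> P (A + B)"
    and smult: "\<And>c A. A \<in> carrier_mat m n \<Longrightarrow> P A \<Longrightarrow> P (c \<cdot>\<^sub>m A)"
    and unit: "\<And>i j. i < m \<Longrightarrow> j < n \<Longrightarrow> P (matrix_unit m n i j)"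
  shows "P A"
proof -
  have "\<forall>A \<in> carrier_mat m n. (\<forall>i<m. \<forall>j<n. (i, j) \<notin> S \<longrightarrow> A $$ (i, j) = 0) \<longrightarrow> P A"
    if "finite S" "S \<subseteq> {..<m} \<times> {..<n}" for S
    using that
  proof (induction S rule: finite_subset_induct)
    case empty
    show ?case
    proof (intro ballI impI)
      fix A :: "'a mat"
      assume "A \<in> carrier_mat m n" "\<forall>i<m. \<forall>j<n. (i, j) \<notin> {} \<longrightarrow> A $$ (i, j) = 0"
      then have "A = 0\<^sub>m m n"
        by (intro eq_matI) auto
      with zero show "P A"
        by simp
    qed
  next
    case (insert ij S)
    obtain i j where ij: "ij = (i, j)" "i < m" "j < n"
      using insert.hyps(2) by auto
    show ?case
    proof (intro ballI impI)
      fix A :: "'a mat"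
      assume A: "A \<in> carrier_mat m n"
        and supp: "\<forall>p<m. \<forall>q<n. (p, q) \<notin> insert ij S \<longrightarrow> A $$ (p, q) = 0"
      define B where "B = mat m n (\<lambda>(p, q). if (p, q) = (i, j) then 0 else A $$ (p, q))"
      have B: "B \<in> carrier_mat m n"
        unfolding B_def by simp
      have "P B"
        using insert.IH B supp ij unfolding B_def by auto
      moreover have "P (A $$ (i, j) \<cdot>\<^sub>m matrix_unit m n i j)"
        using smult unit ij by simp
      ultimately have "P (B + A $$ (i, j) \<cdot>\<^sub>m matrix_unit m n i j)"
        using add B by simp
      moreover have "B + A $$ (i, j) \<cdot>\<^sub>m matrix_unit m n i j = A"
        using A unfolding B_def by (intro eq_matI) auto
      ultimately show "P A"
        by simp
    qed
  qed
  from this[of "{..<m} \<times> {..<n}"] show ?thesis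
    using A by blast
qed

definition linear_mat_map :: "nat \<Rightarrow> nat \<Rightarrow> nat \<Rightarrow> nat \<Rightarrow> ('a :: semiring_1 mat \<Rightarrow> 'a mat) \<Rightarrow> bool" where
  "linear_mat_map m n r s f \<longleftrightarrow>
     (\<forall>A \<in> carrier_mat m n. f A \<in> carrier_mat r s) \<and>
     (\<forall>A \<in> carrier_mat m n. \<forall>B \<in> carrier_mat m n. f (A + B) = f A + f B) \<and>
     (\<forall>c. \<forall>A \<in> carrier_mat m n. f (c \<cdot>\<^sub>m A) = c \<cdot>\<^sub>m f A)"

lemma linear_mat_map_zero:
  assumes "linear_mat_map m n r s f"
  shows "f (0\<^sub>m m n) = 0\<^sub>m r s"
proof -
  have f0: "f (0\<^sub>m m n) \<in> carrier_mat r s"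
    using assms unfolding linear_mat_map_def by simp
  have "0\<^sub>m m n = 0 \<cdot>\<^sub>m (0\<^sub>m m n :: 'a mat)"
    by (intro eq_matI) auto
  then have "f (0\<^sub>m m n) = 0 \<cdot>\<^sub>m f (0\<^sub>m m n)"
    using assms unfolding linear_mat_map_def by (metis zero_carrier_mat)
  also have "\<dots> = 0\<^sub>m r s"
    using f0 by (intro eq_matI) auto
  finally show ?thesis .
qed

lemma linear_mat_map_nonzero_dims:
  assumes "linear_mat_map m n r s f" "A \<in> carrier_mat m n" "f A \<noteq> 0\<^sub>m r s"
  shows "0 < m \<and> 0 < n"
proof (rule ccontr)
  assume "\<not> (0 < m \<and> 0 < n)"
  then have "A = 0\<^sub>m m n"
    using assms(2) by (intro eq_matI) auto
  with assms linear_mat_map_zero show False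
    by metis
qed

lemma linear_mat_map_eq_on_matrix_units:
  assumes f: "linear_mat_map m n r s f" and g: "linear_mat_map m n r s g"
    and units: "\<And>i j. i < m \<Longrightarrow> j < n \<Longrightarrow> f (matrix_unit m n i j) = g (matrix_unit m n i j)"
    and A: "A \<in> carrier_mat m n"
  shows "f A = g A"
  using A
proof (induction rule: carrier_mat_matrix_unit_induct)
  case zero
  show ?case
    using linear_mat_map_zero[OF f] linear_mat_map_zero[OF g] by simp
next
  case (add A B)
  then show ?case
    using f g unfolding linear_mat_map_def by simp
next
  case (smult c A)
  then show ?case
    using f g unfolding linear_mat_map_def by simp
next
  case (unit i j)
  then show ?case
    by (rule units)
qed

lemma linear_mat_map_sandwich:
  fixes f :: "'a :: comm_semiring_1 mat \<Rightarrow> 'a mat"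
  assumes f: "linear_mat_map m n r s f" and X: "X \<in> carrier_mat r' r" and Y: "Y \<in> carrier_mat s s'"
  shows "linear_mat_map m n r' s' (\<lambda>A. X * f A * Y)"
  unfolding linear_mat_map_def
proof (intro conjI ballI allI)
  fix A :: "'a mat" assume A: "A \<in> carrier_mat m n"
  then have fA: "f A \<in> carrier_mat r s"
    using f unfolding linear_mat_map_def by blast
  then show "X * f A * Y \<in> carrier_mat r' s'"
    using X Y by simp
  fix c
  have "f (c \<cdot>\<^sub>m A) = c \<cdot>\<^sub>m f A"
    using f A unfolding linear_mat_map_def by blast
  then show "X * f (c \<cdot>\<^sub>m A) * Y = c \<cdot>\<^sub>m (X * f A * Y)"
    using X Y fA by (simp add: mult_smult_right mult_smult_left)
next
  fix A B :: "'a mat" assume A: "A \<in> carrier_mat m n" and B: "B \<in> carrier_mat m n"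
  then have fA: "f A \<in> carrier_mat r s" and fB: "f B \<in> carrier_mat r s"
    and "f (A + B) = f A + f B"
    using f unfolding linear_mat_map_def by blast+
  then show "X * f (A + B) * Y = X * f A * Y + X * f B * Y"
    using X Y
    by (simp add: mult_add_distrib_mat[OF X fA fB] add_mult_distrib_mat[OF mult_carrier_mat[OF X fA] mult_carrier_mat[OF X fB] Y])
qed

lemma triple_morphism_linear: "triple_morphism m n r s T \<Longrightarrow> linear_mat_map m n r s T"
  unfolding triple_morphism_def linear_mat_map_def by blast

lemma triple_morphism_matrix_units:
  assumes T: "triple_morphism m n r s T"
    and "i < m" "k < m" "p < m" "j < n" "l < n" "q < n"
  shows "T (matrix_unit m n i j) * mat_adjoint (T (matrix_unit m n k l)) * T (matrix_unit m n p q)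
    = (if j = l \<and> k = p then T (matrix_unit m n i q) else 0\<^sub>m r s)"
proof -
  have "T (matrix_unit m n i j) * mat_adjoint (T (matrix_unit m n k l)) * T (matrix_unit m n p q)
    = triple_prod (T (matrix_unit m n i j)) (T (matrix_unit m n k l)) (T (matrix_unit m n p q))"
    by (simp add: triple_prod_def)
  also have "\<dots> = T (triple_prod (matrix_unit m n i j) (matrix_unit m n k l) (matrix_unit m n p q))"
    using T unfolding triple_morphism_def by simp
  finally show ?thesis
    using assms linear_mat_map_zero[OF triple_morphism_linear[OF T]]
    by (simp add: triple_prod_matrix_unit)
qed

section \<open>Block-diagonal normal form\<close>

definition orthogonal_isometries :: "nat \<Rightarrow> nat \<Rightarrow> nat \<Rightarrow> (nat \<Rightarrow> complex mat) \<Rightarrow> bool" where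
  "orthogonal_isometries nr k c F \<longleftrightarrow>
     (\<forall>i<c. F i \<in> carrier_mat nr k) \<and>
     (\<forall>i<c. \<forall>i'<c. mat_adjoint (F i) * F i' = (if i = i' then 1\<^sub>m k else 0\<^sub>m k k))"

text \<open>Column l * c + i of interleave_cols nr k c F is column l of F i. This matches the
  positions of the l-th diagonal copy of A in block_diag_rep, and U * stride_mat nr' k c i
  recovers F i from any U extending the interleaving.\<close>

definition interleave_cols :: "nat \<Rightarrow> nat \<Rightarrow> nat \<Rightarrow> (nat \<Rightarrow> 'a mat) \<Rightarrow> 'a mat" where
  "interleave_cols nr k c F = mat nr (k * c) (\<lambda>(t, p). F (p mod c) $$ (t, p div c))"

definition stride_mat :: "nat \<Rightarrow> nat \<Rightarrow> nat \<Rightarrow> nat \<Rightarrow> 'a :: {zero, one} mat" where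
  "stride_mat nr k c i = mat nr k (\<lambda>(p, l). if p = l * c + i then 1 else 0)"

lemma interleave_cols_isometry:
  assumes F: "orthogonal_isometries nr k c F"
  shows "isometry_mat nr (k * c) (interleave_cols nr k c F)"
proof -
  let ?B = "interleave_cols nr k c F"
  have Fc: "\<And>i. i < c \<Longrightarrow> F i \<in> carrier_mat nr k"
    and orth: "\<And>i i'. i < c \<Longrightarrow> i' < c \<Longrightarrow> mat_adjoint (F i) * F i' = (if i = i' then 1\<^sub>m k else 0\<^sub>m k k)"
    using F unfolding orthogonal_isometries_def by auto
  have Bc: "?B \<in> carrier_mat nr (k * c)"
    unfolding interleave_cols_def by simp
  have "(mat_adjoint ?B * ?B) $$ (p, q) = 1\<^sub>m (k * c) $$ (p, q)" if "p < k * c" "q < k * c" for p q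
  proof -
    have c: "0 < c"
      using that by (cases c) auto
    then have bounds: "p mod c < c" "p div c < k" "q mod c < c" "q div c < k"
      using that by (auto simp: div_less_iff_less_mult)
    have "(mat_adjoint ?B * ?B) $$ (p, q)
        = (\<Sum>t<nr. cnj (F (p mod c) $$ (t, p div c)) * F (q mod c) $$ (t, q div c))"
      using Bc that by (simp add: scalar_prod_def atLeast0LessThan interleave_cols_def)
    also have "\<dots> = (mat_adjoint (F (p mod c)) * F (q mod c)) $$ (p div c, q div c)"
      using Fc[OF bounds(1)] Fc[OF bounds(3)] bounds by (simp add: scalar_prod_def atLeast0LessThan)
    also have "\<dots> = (if p mod c = q mod c \<and> p div c = q div c then 1 else 0)"
      using orth bounds by auto
    also have "\<dots> = 1\<^sub>m (k * c) $$ (p, q)"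
      using that div_mult_mod_eq[of p c] div_mult_mod_eq[of q c] by (metis index_one_mat(1))
    finally show ?thesis .
  qed
  then show ?thesis
    unfolding isometry_mat_def using Bc by (auto intro!: eq_matI)
qed

lemma mult_stride_mat:
  fixes U :: "'a :: semiring_1 mat"
  assumes U: "U \<in> carrier_mat nr nr'" and Fi: "F i \<in> carrier_mat nr k" and i: "i < c"
    and bound: "k * c \<le> nr'"
    and cols: "\<And>t p. t < nr \<Longrightarrow> p < k * c \<Longrightarrow> U $$ (t, p) = interleave_cols nr k c F $$ (t, p)"
  shows "U * stride_mat nr' k c i = F i"
proof (rule eq_matI)
  fix t l assume "t < dim_row (F i)" "l < dim_col (F i)"
  then have t: "t < nr" and l: "l < k"
    using Fi by auto
  have "l * c + i < (l + 1) * c"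
    using i by simp
  also have "\<dots> \<le> k * c"
    using l by (intro mult_right_mono) auto
  finally have "l * c + i < k * c" .
  then have lci: "l * c + i < nr'"
    using bound by simp
  have "(U * stride_mat nr' k c i) $$ (t, l) = (\<Sum>p<nr'. U $$ (t, p) * (if p = l * c + i then 1 else 0))"
    using U t l by (simp add: scalar_prod_def atLeast0LessThan stride_mat_def)
  also have "\<dots> = (\<Sum>p<nr'. if p = l * c + i then U $$ (t, p) else 0)"
    by (intro sum.cong refl) simp
  also have "\<dots> = U $$ (t, l * c + i)"
    using lci by simp
  also have "\<dots> = F i $$ (t, l)"
    using cols[OF t \<open>l * c + i < k * c\<close>] \<open>l * c + i < k * c\<close> i t by (simp add: interleave_cols_def)
  finally show "(U * stride_mat nr' k c i) $$ (t, l) = F i $$ (t, l)" .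
qed (use U Fi in \<open>auto simp: stride_mat_def\<close>)

lemma block_diag_rep_matrix_unit:
  assumes i: "i < m" and j: "j < n"
  shows "block_diag_rep k m n r s (matrix_unit m n i j) = stride_mat r k m i * mat_adjoint (stride_mat s k n j)"
proof (rule eq_matI)
  fix p q assume "p < dim_row (stride_mat r k m i * mat_adjoint (stride_mat s k n j) :: complex mat)"
    "q < dim_col (stride_mat r k m i * mat_adjoint (stride_mat s k n j) :: complex mat)"
  then have p: "p < r" and q: "q < s"
    by (simp_all add: stride_mat_def)
  have m: "0 < m" and n: "0 < n"
    using i j by auto
  have "(stride_mat r k m i * mat_adjoint (stride_mat s k n j) :: complex mat) $$ (p, q)
      = (\<Sum>l<k. (if p = l * m + i then 1 else 0) * cnj (if q = l * n + j then 1 else 0))"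
    using p q by (simp add: scalar_prod_def atLeast0LessThan stride_mat_def)
  also have "\<dots> = (\<Sum>l<k. if l = p div m then
      (if p mod m = i \<and> q div n = p div m \<and> q mod n = j then 1 else 0) else 0)"
    using i j by (intro sum.cong refl) auto
  also have "\<dots> = (if p < k * m \<and> q < k * n \<and> p div m = q div n \<and> p mod m = i \<and> q mod n = j then 1 else 0)"
    using m n by (auto simp flip: div_less_iff_less_mult)
  also have "\<dots> = block_diag_rep k m n r s (matrix_unit m n i j) $$ (p, q)"
    using p q m n by (auto simp: block_diag_rep_def)
  finally show "block_diag_rep k m n r s (matrix_unit m n i j) $$ (p, q)
      = (stride_mat r k m i * mat_adjoint (stride_mat s k n j)) $$ (p, q)" ..
qed (simp_all add: block_diag_rep_def stride_mat_def)

lemma linear_mat_map_block_diag_rep: "linear_mat_map m n r s (block_diag_rep k m n r s)"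
proof -
  have "i mod m < m" if "i < k * m" for i
    using that by (cases "m = 0") auto
  moreover have "j mod n < n" if "j < k * n" for j
    using that by (cases "n = 0") auto
  ultimately show ?thesis
    unfolding linear_mat_map_def by (auto simp: block_diag_rep_def intro!: eq_matI)
qed

lemma block_diag_rep_no_copies [simp]: "block_diag_rep 0 m n r s A = 0\<^sub>m r s"
  by (auto simp: block_diag_rep_def intro!: eq_matI)

lemma inj_on_block_diag_rep:
  assumes "0 < k" "k * m \<le> r" "k * n \<le> s"
  shows "inj_on (block_diag_rep k m n r s) (carrier_mat m n)"
proof (rule inj_onI)
  fix A B assume A: "A \<in> carrier_mat m n" and B: "B \<in> carrier_mat m n"
    and eq: "block_diag_rep k m n r s A = block_diag_rep k m n r s B"
  have km: "m \<le> k * m" and kn: "n \<le> k * n"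
    using assms(1) by simp_all
  have small: "i < k * m" "j < k * n" "i < r" "j < s" if "i < m" "j < n" for i j
    using that km kn assms(2,3) by linarith+
  have "block_diag_rep k m n r s A $$ (i, j) = A $$ (i, j)"
    and "block_diag_rep k m n r s B $$ (i, j) = B $$ (i, j)" if "i < m" "j < n" for i j
    using small[OF that] that by (simp_all add: block_diag_rep_def)
  with eq A B show "A = B"
    by (intro eq_matI) auto
qed

lemma unitary_sandwich_cancel:
  assumes U: "unitary_mat r U" and V: "unitary_mat s V"
    and X: "X \<in> carrier_mat r s" and Y: "Y \<in> carrier_mat r s"
    and eq: "U * X * V = U * Y * V"
  shows "X = Y"
proof -
  have Uc: "U \<in> carrier_mat r r" and UU: "mat_adjoint U * U = 1\<^sub>m r"
    and Vc: "V \<in> carrier_mat s s" and VV: "V * mat_adjoint V = 1\<^sub>m s"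
    using U V unfolding unitary_mat_def by auto
  have "Z = mat_adjoint U * (U * Z * V) * mat_adjoint V" if "Z \<in> carrier_mat r s" for Z
  proof -
    have "mat_adjoint U * (U * Z * V) * mat_adjoint V = (mat_adjoint U * U) * Z * (V * mat_adjoint V)"
      using Uc Vc that by (simp add: assoc_mult_mat_dims)
    then show ?thesis
      using UU VV that by simp
  qed
  then show ?thesis
    using X Y eq by metis
qed

lemma block_diag_sandwich_inj_on:
  assumes U: "unitary_mat r U" and V: "unitary_mat s V" and "0 < k" "k * m \<le> r" "k * n \<le> s"
  shows "inj_on (\<lambda>A. U * block_diag_rep k m n r s A * V) (carrier_mat m n)"
proof (rule inj_onI)
  fix A B assume A: "A \<in> carrier_mat m n" and B: "B \<in> carrier_mat m n"
    and "U * block_diag_rep k m n r s A * V = U * block_diag_rep k m n r s B * V"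
  then have "block_diag_rep k m n r s A = block_diag_rep k m n r s B"
    using unitary_sandwich_cancel[OF U V] by (simp add: block_diag_rep_def)
  then show "A = B"
    using inj_on_block_diag_rep[OF assms(3-5)] A B by (simp add: inj_on_def)
qed

lemma orthogonal_isometries_block_diag:
  assumes F: "orthogonal_isometries r k m F" and G: "orthogonal_isometries s k n G"
  obtains U V where "unitary_mat r U" "unitary_mat s V" "k * m \<le> r" "k * n \<le> s"
    "\<And>i j. i < m \<Longrightarrow> j < n \<Longrightarrow>
      F i * mat_adjoint (G j) = U * block_diag_rep k m n r s (matrix_unit m n i j) * V"
proof -
  note F_iso = interleave_cols_isometry[OF F] and G_iso = interleave_cols_isometry[OF G]
  obtain U where U: "unitary_mat r U"
    and U_cols: "\<And>t p. t < r \<Longrightarrow> p < k * m \<Longrightarrow> U $$ (t, p) = interleave_cols r k m F $$ (t, p)"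
    using isometry_extends_to_unitary[OF F_iso] by blast
  obtain W where W: "unitary_mat s W"
    and W_cols: "\<And>t q. t < s \<Longrightarrow> q < k * n \<Longrightarrow> W $$ (t, q) = interleave_cols s k n G $$ (t, q)"
    using isometry_extends_to_unitary[OF G_iso] by blast
  have km: "k * m \<le> r" and kn: "k * n \<le> s"
    using isometry_mat_dim_le F_iso G_iso by blast+
  have Uc: "U \<in> carrier_mat r r" and Wc: "W \<in> carrier_mat s s"
    using U W unfolding unitary_mat_def by auto
  have "F i * mat_adjoint (G j) = U * block_diag_rep k m n r s (matrix_unit m n i j) * mat_adjoint W"
    if i: "i < m" and j: "j < n" for i j
  proof -
    have Fi: "F i \<in> carrier_mat r k" and Gj: "G j \<in> carrier_mat s k"
      using F G i j unfolding orthogonal_isometries_def by auto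
    have "U * block_diag_rep k m n r s (matrix_unit m n i j) * mat_adjoint W
        = (U * stride_mat r k m i) * mat_adjoint (W * stride_mat s k n j)"
      using Uc Wc by (simp add: block_diag_rep_matrix_unit[OF i j] mat_adjoint_mult assoc_mult_mat_dims stride_mat_def)
    also have "\<dots> = F i * mat_adjoint (G j)"
      using mult_stride_mat[OF Uc Fi i km U_cols] mult_stride_mat[OF Wc Gj j kn W_cols] by simp
    finally show ?thesis ..
  qed
  moreover have "unitary_mat s (mat_adjoint W)"
    using W unfolding unitary_mat_def by simp
  ultimately show ?thesis
    using that U km kn by blast
qed

lemma partial_isometry_range_isometry:
  assumes a: "a \<in> carrier_mat r s" and aaa: "a * mat_adjoint a * a = a"
  obtains k W where "isometry_mat r k W" "W * mat_adjoint W = a * mat_adjoint a"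
proof -
  have "(a * mat_adjoint a) * (a * mat_adjoint a) = (a * mat_adjoint a * a) * mat_adjoint a"
    using a by (simp add: assoc_mult_mat_dims)
  then have "projection_mat r (a * mat_adjoint a)"
    unfolding projection_mat_def using a aaa by (simp add: mat_adjoint_mult)
  then show ?thesis
    using projection_mat_factor that by blast
qed

context
  fixes m n r s k :: nat and e :: "nat \<Rightarrow> nat \<Rightarrow> complex mat" and W :: "complex mat"
  assumes m: "0 < m" and n: "0 < n"
    and e: "\<And>i j. i < m \<Longrightarrow> j < n \<Longrightarrow> e i j \<in> carrier_mat r s"
    and rel: "\<And>i j p q u v. i < m \<Longrightarrow> p < m \<Longrightarrow> u < m \<Longrightarrow> j < n \<Longrightarrow> q < n \<Longrightarrow> v < n \<Longrightarrow>
      e i j * mat_adjoint (e p q) * e u v = (if j = q \<and> p = u then e i v else 0\<^sub>m r s)"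
    and W: "isometry_mat r k W" and WW: "W * mat_adjoint W = e 0 0 * mat_adjoint (e 0 0)"
begin

private lemma carriers: "e 0 0 \<in> carrier_mat r s" "W \<in> carrier_mat r k"
  using e m n W unfolding isometry_mat_def by auto

private lemma range_absorbs_isometry: "e 0 0 * (mat_adjoint (e 0 0) * W) = W"
proof -
  have "e 0 0 * (mat_adjoint (e 0 0) * W) = (W * mat_adjoint W) * W"
    using WW carriers by (simp add: assoc_mult_mat_dims)
  also have "\<dots> = W"
    using W carriers unfolding isometry_mat_def by (simp add: assoc_mult_mat_dims)
  finally show ?thesis .
qed

private lemma isometry_compress: "mat_adjoint W * e 0 0 * (mat_adjoint (e 0 0) * W) = 1\<^sub>m k"
  using range_absorbs_isometry W carriers unfolding isometry_mat_def by (simp add: assoc_mult_mat_dims)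

lemma matrix_unit_system_left_isometries:
  "orthogonal_isometries r k m (\<lambda>i. e i 0 * mat_adjoint (e 0 0) * W)"
  unfolding orthogonal_isometries_def
proof (intro conjI allI impI)
  fix i assume "i < m"
  then show "e i 0 * mat_adjoint (e 0 0) * W \<in> carrier_mat r k"
    using e[OF \<open>i < m\<close> n] carriers by (meson mult_carrier_mat mat_adjoint_carrier)
next
  fix i i' assume i: "i < m" and i': "i' < m"
  have "mat_adjoint (e i 0 * mat_adjoint (e 0 0) * W) * (e i' 0 * mat_adjoint (e 0 0) * W)
      = mat_adjoint W * (e 0 0 * mat_adjoint (e i 0) * e i' 0) * (mat_adjoint (e 0 0) * W)"
    using e[OF i n] e[OF i' n] carriers by (simp add: mat_adjoint_mult assoc_mult_mat_dims)
  also have "e 0 0 * mat_adjoint (e i 0) * e i' 0 = (if i = i' then e 0 0 else 0\<^sub>m r s)"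
    using rel[of 0 i i' 0 0 0] i i' m n by simp
  finally show "mat_adjoint (e i 0 * mat_adjoint (e 0 0) * W) * (e i' 0 * mat_adjoint (e 0 0) * W)
      = (if i = i' then 1\<^sub>m k else 0\<^sub>m k k)"
    using isometry_compress carriers by (cases "i = i'") simp_all
qed

lemma matrix_unit_system_right_isometries:
  "orthogonal_isometries s k n (\<lambda>j. mat_adjoint (e 0 j) * W)"
  unfolding orthogonal_isometries_def
proof (intro conjI allI impI)
  fix j assume "j < n"
  then show "mat_adjoint (e 0 j) * W \<in> carrier_mat s k"
    using e[OF m \<open>j < n\<close>] carriers by (meson mult_carrier_mat mat_adjoint_carrier)
next
  fix j j' assume j: "j < n" and j': "j' < n"
  have "mat_adjoint (mat_adjoint (e 0 j) * W) * (mat_adjoint (e 0 j') * W)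
      = mat_adjoint W * e 0 j * mat_adjoint (e 0 j') * (e 0 0 * (mat_adjoint (e 0 0) * W))"
    unfolding range_absorbs_isometry using e[OF m j] e[OF m j'] carriers
    by (simp add: mat_adjoint_mult assoc_mult_mat_dims)
  also have "\<dots> = mat_adjoint W * (e 0 j * mat_adjoint (e 0 j') * e 0 0) * (mat_adjoint (e 0 0) * W)"
    using e[OF m j] e[OF m j'] carriers by (simp add: assoc_mult_mat_dims)
  also have "e 0 j * mat_adjoint (e 0 j') * e 0 0 = (if j = j' then e 0 0 else 0\<^sub>m r s)"
    using rel[of 0 0 0 j j' 0] j j' m n by simp
  finally show "mat_adjoint (mat_adjoint (e 0 j) * W) * (mat_adjoint (e 0 j') * W)
      = (if j = j' then 1\<^sub>m k else 0\<^sub>m k k)"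
    using isometry_compress carriers by (cases "j = j'") simp_all
qed

lemma matrix_unit_system_factorization:
  assumes i: "i < m" and j: "j < n"
  shows "e i j = (e i 0 * mat_adjoint (e 0 0) * W) * mat_adjoint (mat_adjoint (e 0 j) * W)"
proof -
  have "mat_adjoint (e 0 0) * e 0 0 * mat_adjoint (e 0 0) = mat_adjoint (e 0 0 * mat_adjoint (e 0 0) * e 0 0)"
    using carriers by (simp add: mat_adjoint_mult assoc_mult_mat_dims)
  also have "\<dots> = mat_adjoint (e 0 0)"
    using rel[of 0 0 0 0 0 0] m n by simp
  finally have "mat_adjoint (e 0 0) * (W * mat_adjoint W) = mat_adjoint (e 0 0)"
    using WW carriers by (simp add: assoc_mult_mat_dims)
  moreover have "(e i 0 * mat_adjoint (e 0 0) * W) * mat_adjoint (mat_adjoint (e 0 j) * W)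
      = e i 0 * (mat_adjoint (e 0 0) * (W * mat_adjoint W)) * e 0 j"
    using e[OF i n] e[OF m j] carriers by (simp add: mat_adjoint_mult assoc_mult_mat_dims)
  moreover have "e i 0 * mat_adjoint (e 0 0) * e 0 j = e i j"
    using rel[of i 0 0 0 0 j] i j m n by simp
  ultimately show ?thesis
    by simp
qed

end

lemma matrix_unit_system_factor:
  fixes e :: "nat \<Rightarrow> nat \<Rightarrow> complex mat"
  assumes m: "0 < m" and n: "0 < n"
    and e: "\<And>i j. i < m \<Longrightarrow> j < n \<Longrightarrow> e i j \<in> carrier_mat r s"
    and rel: "\<And>i j p q u v. i < m \<Longrightarrow> p < m \<Longrightarrow> u < m \<Longrightarrow> j < n \<Longrightarrow> q < n \<Longrightarrow> v < n \<Longrightarrow>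
      e i j * mat_adjoint (e p q) * e u v = (if j = q \<and> p = u then e i v else 0\<^sub>m r s)"
  obtains k F G where "orthogonal_isometries r k m F" "orthogonal_isometries s k n G"
    "\<And>i j. i < m \<Longrightarrow> j < n \<Longrightarrow> e i j = F i * mat_adjoint (G j)"
proof -
  have "e 0 0 * mat_adjoint (e 0 0) * e 0 0 = e 0 0"
    using rel[of 0 0 0 0 0 0] m n by simp
  then obtain k W where "isometry_mat r k W" "W * mat_adjoint W = e 0 0 * mat_adjoint (e 0 0)"
    using partial_isometry_range_isometry e m n by blast
  from matrix_unit_system_left_isometries[OF m n e rel this]
    matrix_unit_system_right_isometries[OF m n e rel this]
    matrix_unit_system_factorization[OF m n e rel this]
  show ?thesis
    using that by blast
qed

lemma triple_morphism_block_diag_form: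
  assumes T: "triple_morphism m n r s T" and "0 < m" "0 < n"
  obtains k U V where "k * m \<le> r" "k * n \<le> s" "unitary_mat r U" "unitary_mat s V"
    "\<And>A. A \<in> carrier_mat m n \<Longrightarrow> T A = U * block_diag_rep k m n r s A * V"
proof -
  note T_lin = triple_morphism_linear[OF T]
  obtain k F G where FG: "orthogonal_isometries r k m F" "orthogonal_isometries s k n G"
    and units: "\<And>i j. i < m \<Longrightarrow> j < n \<Longrightarrow> T (matrix_unit m n i j) = F i * mat_adjoint (G j)"
    using matrix_unit_system_factor[of m n "\<lambda>i j. T (matrix_unit m n i j)" r s]
      triple_morphism_matrix_units[OF T] T_lin assms(2,3) unfolding linear_mat_map_def by auto
  obtain U V where U: "unitary_mat r U" and V: "unitary_mat s V" and bounds: "k * m \<le> r" "k * n \<le> s"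
    and block_units: "\<And>i j. i < m \<Longrightarrow> j < n \<Longrightarrow>
      F i * mat_adjoint (G j) = U * block_diag_rep k m n r s (matrix_unit m n i j) * V"
    using orthogonal_isometries_block_diag[OF FG] by blast
  have "U \<in> carrier_mat r r" "V \<in> carrier_mat s s"
    using U V unfolding unitary_mat_def by auto
  note sandwich = linear_mat_map_sandwich[OF linear_mat_map_block_diag_rep this]
  show ?thesis
    using that[OF bounds U V] linear_mat_map_eq_on_matrix_units[OF T_lin sandwich] units block_units
    by simp
qed

theorem lemma3p5:
  fixes m n r s :: nat and T :: "complex mat \<Rightarrow> complex mat"
  assumes "triple_morphism m n r s T"
    and "\<exists>A \<in> carrier_mat m n. T A \<noteq> 0\<^sub>m r s"
  shows "inj_on T (carrier_mat m n) \<and>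
    (\<exists>k U V. k \<ge> 1 \<and> k * m \<le> r \<and> k * n \<le> s \<and> unitary_mat r U \<and> unitary_mat s V \<and>
       (\<forall>A \<in> carrier_mat m n. T A = U * block_diag_rep k m n r s A * V))"
proof -
  have T: "linear_mat_map m n r s T"
    using assms(1) by (rule triple_morphism_linear)
  obtain A0 where A0: "A0 \<in> carrier_mat m n" "T A0 \<noteq> 0\<^sub>m r s"
    using assms(2) by blast
  have "0 < m" "0 < n"
    using linear_mat_map_nonzero_dims[OF T A0] by auto
  then obtain k U V where bounds: "k * m \<le> r" "k * n \<le> s" and U: "unitary_mat r U" and V: "unitary_mat s V"
    and rep: "\<And>A. A \<in> carrier_mat m n \<Longrightarrow> T A = U * block_diag_rep k m n r s A * V"
    using triple_morphism_block_diag_form[OF assms(1)] by blast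
  have "k \<noteq> 0"
  proof
    assume "k = 0"
    then have "T A0 = 0\<^sub>m r s"
      using rep[OF A0(1)] U V unfolding unitary_mat_def by auto
    with A0(2) show False ..
  qed
  then have "inj_on (\<lambda>A. U * block_diag_rep k m n r s A * V) (carrier_mat m n)"
    using block_diag_sandwich_inj_on[OF U V _ bounds] by simp
  then have "inj_on T (carrier_mat m n)"
    by (rule inj_on_cong[THEN iffD2, rotated]) (simp add: rep)
  with \<open>k \<noteq> 0\<close> bounds U V rep show ?thesis
    by (metis One_nat_def Suc_leI neq0_conv)
qed

end
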